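(* Problem $(\overline{\mathrm{P}})$ is a restriction of problem (P). That is, whenever $(\mathbf{x}^0,\mathbf{x}^\uparrow,\mathbf{x}^\downarrow)$ together with some auxiliary variables is feasible for $(\overline{\mathrm{P}})$, there exist auxiliary variables with which $(\mathbf{x}^0,\mathbf{x}^\uparrow,\mathbf{x}^\downarrow)$ is feasible for (P). The two problems have the same objective.
   Context: Let $K$ be a positive integer, $\Delta t>0$, $T=K\Delta t$, $\mathcal{K}=\{1,\dots,K\}$, $0\le\underline y\le\bar y$, $\underline x\le0\le\bar x$, $\eta^{c},\eta^{d}\in(0,1)$, $\Delta\eta=1/\eta^{d}-\eta^{c}$, $y_0\ge0$ and $\gamma\in[0,T]$. Let $c$ and $\phi$ be real-valued cost functions. Problem (P) minimizes $c(\mathbf{x}^0,\mathbf{x}^\uparrow,\mathbf{x}^\downarrow)+\phi(\mathbf{x}^0,\mathbf{x}^\uparrow,\mathbf{x}^\downarrow,y_0)$. Its variables are $\mathbf{x}^0\in\mathbb{R}^K$; $\mathbf{x}^\uparrow,\mathbf{x}^\downarrow\in\mathbb{R}^K_+$; $\boldsymbol\alpha,\boldsymbol\beta\in\mathbb{R}^K$; $\underline{\boldsymbol\lambda},\bar{\boldsymbol\lambda}\in\mathbb{R}^K_+$; $\underline{\boldsymbol\Lambda}_k\in\mathbb{R}^k_+$ and $\bar{\boldsymbol\Lambda}_k\in\mathbb{R}^k$ for $k\in\mathcal{K}$; and $\upsilon_{1k},\upsilon_{2k}\in\{0,1\}$ for $k\le K-1$. Its constraints are: (a) $x^0_k+x^\uparrow_k\le\bar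 x$ and $x^0_k-x^\downarrow_k\ge\underline x$; (b) $y_0-\gamma\underline\lambda_k-\Delta t\sum_{l\le k}(\alpha_l+\underline\Lambda_{kl})\ge\underline y$; (c) $\alpha_k\ge\eta^{c}x^0_k$, $\alpha_k\ge x^0_k/\eta^{d}$, $\beta_k\ge\eta^{c}(x^0_k+x^\uparrow_k)$ and $\beta_k\ge(x^0_k+x^\uparrow_k)/\eta^{d}$; (d) $\underline\Lambda_{kl}+\underline\lambda_k+\alpha_l-\beta_l\ge0$ for $l\le k$; (e) $y_0+\gamma\bar\lambda_k+\Delta t\sum_{l\le k}\bar\Lambda_{kl}\le\bar y$; (f) $\bar\Lambda_{kk}\ge-\eta^{c}x^0_k$, $\bar\Lambda_{kk}\ge\eta^{c}(x^\downarrow_k-x^0_k)-\bar\lambda_k$ and $\bar\Lambda_{kk}\ge0$; (g) for $k\le K-1$: $(1-\upsilon_{1k})\underline x\le x^0_k-x^\downarrow_k\le\upsilon_{1k}\bar x$ and $\upsilon_{2k}\underline x\le x^0_k\le(1-\upsilon_{2k})\bar x$; (h) for $l<k$: - $\bar\Lambda_{kl}\ge\frac{x^\downarrow_l-x^0_l}{\eta^{d}}-\bar\lambda_k+(1-\upsilon_{1l})\Delta\eta\,\underline x$, - $\bar\Lambda_{kl}\ge-\frac{x^0_l}{\eta^{d}}+\upsilon_{2l}\Delta\eta\,\underline x$, - $\bar\Lambda_{kl}\ge\eta^{c}(x^\downarrow_l-x^0_l)-\bar\lambda_k-\upsilon_{1l}\Delta\eta\,\bar x$, - $\bar\Lambda_{kl}\ge-\eta^{c}x^0_l-(1-\upsilon_{2l})\Delta\eta\,\bar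 x$; (i) for $l<k$: $\bar\Lambda_{kl}x^\downarrow_l+\bar\lambda_kx^0_l\ge\upsilon_{2l}\frac{\underline x(\bar x-\underline x)}{\eta^{d}}-\upsilon_{1l}\frac{\bar x^2}{4\eta^{d}}$. All unqualified indices range over $\mathcal{K}$. Problem $(\overline{\mathrm{P}})$ has the same objective and variables as (P), plus additional binaries $\upsilon_{3k}\in\{0,1\}$ for $k\le K-1$. Its constraints are (a)–(h), without (i), together with: - for $k\le K-1$: $x^\downarrow_k-(1-\eta^{c}\eta^{d})x^0_k-\eta^{d}\bar\lambda_k\ge-((2-\eta^{c}\eta^{d})\bar x-\underline x)(1-\upsilon_{3k})$; - for $k\le K-1$: $x^\downarrow_k-(1-\eta^{c}\eta^{d})x^0_k-\eta^{d}\bar\lambda_k\le\upsilon_{3k}(\eta^{c}\eta^{d}\bar x-\underline x)$; - for $l<k$: $\bar\Lambda_{kl}\ge-\eta^{c}x^0_l-(\upsilon_{1l}+1-\upsilon_{3l})\Delta\eta\,\bar x$; - for $l<k$: $\bar\Lambda_{kl}\ge\frac{x^\downarrow_l-x^0_l}{\eta^{d}}-\bar\lambda_k+(\upsilon_{2l}+\upsilon_{3l})\Delta\eta\,\underline x$. *)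

theory Defs
  imports Complex_Main
begin

text \<open>Vectors indexed by 1..K are functions nat => real (values outside 1..K irrelevant).
  The triangular matrices Lambda_k (k in 1..K) are functions Lam k l, used for 1 <= l <= k.\<close>

definition dEta :: "real \<Rightarrow> real \<Rightarrow> real" where
  "dEta ec ed = 1 / ed - ec"

definition common_constr ::
  "nat \<Rightarrow> real \<Rightarrow> real \<Rightarrow> real \<Rightarrow> real \<Rightarrow> real \<Rightarrow> real \<Rightarrow> real \<Rightarrow> real \<Rightarrow> real \<Rightarrow>
   (nat \<Rightarrow> real) \<Rightarrow> (nat \<Rightarrow> real) \<Rightarrow> (nat \<Rightarrow> real) \<Rightarrow>
   (nat \<Rightarrow> real) \<Rightarrow> (nat \<Rightarrow> real) \<Rightarrow> (nat \<Rightarrow> real) \<Rightarrow> (nat \<Rightarrow> real) \<Rightarrow>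
   (nat \<Rightarrow> nat \<Rightarrow> real) \<Rightarrow> (nat \<Rightarrow> nat \<Rightarrow> real) \<Rightarrow> (nat \<Rightarrow> bool) \<Rightarrow> (nat \<Rightarrow> bool) \<Rightarrow> bool" where
  "common_constr K dt gam ylo yhi xlo xhi ec ed y0 x0 xu xd al be laL laU LaL LaU u1 u2 \<longleftrightarrow>
     (\<forall>k\<in>{1..K}. xu k \<ge> 0 \<and> xd k \<ge> 0 \<and> laL k \<ge> 0 \<and> laU k \<ge> 0 \<and> (\<forall>l\<in>{1..k}. LaL k l \<ge> 0)) \<and>
     \<comment> \<open>(a)\<close>
     (\<forall>k\<in>{1..K}. x0 k + xu k \<le> xhi \<and> x0 k - xd k \<ge> xlo) \<and>
     \<comment> \<open>(b)\<close>
     (\<forall>k\<in>{1..K}. y0 - gam * laL k - dt * (\<Sum>l=1..k. al l + LaL k l) \<ge> ylo) \<and>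
     \<comment> \<open>(c)\<close>
     (\<forall>k\<in>{1..K}. al k \<ge> ec * x0 k \<and> al k \<ge> x0 k / ed \<and>
        be k \<ge> ec * (x0 k + xu k) \<and> be k \<ge> (x0 k + xu k) / ed) \<and>
     \<comment> \<open>(d)\<close>
     (\<forall>k\<in>{1..K}. \<forall>l\<in>{1..k}. LaL k l + laL k + al l - be l \<ge> 0) \<and>
     \<comment> \<open>(e)\<close>
     (\<forall>k\<in>{1..K}. y0 + gam * laU k + dt * (\<Sum>l=1..k. LaU k l) \<le> yhi) \<and>
     \<comment> \<open>(f)\<close>
     (\<forall>k\<in>{1..K}. LaU k k \<ge> - ec * x0 k \<and> LaU k k \<ge> ec * (xd k - x0 k) - laU k \<and> LaU k k \<ge> 0) \<and>
     \<comment> \<open>(g)\<close>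
     (\<forall>k\<in>{1..K-1}. (1 - of_bool (u1 k)) * xlo \<le> x0 k - xd k \<and> x0 k - xd k \<le> of_bool (u1 k) * xhi \<and>
        of_bool (u2 k) * xlo \<le> x0 k \<and> x0 k \<le> (1 - of_bool (u2 k)) * xhi) \<and>
     \<comment> \<open>(h)\<close>
     (\<forall>k\<in>{1..K}. \<forall>l\<in>{1..<k}.
        LaU k l \<ge> (xd l - x0 l) / ed - laU k + (1 - of_bool (u1 l)) * dEta ec ed * xlo \<and>
        LaU k l \<ge> - x0 l / ed + of_bool (u2 l) * dEta ec ed * xlo \<and>
        LaU k l \<ge> ec * (xd l - x0 l) - laU k - of_bool (u1 l) * dEta ec ed * xhi \<and>
        LaU k l \<ge> - ec * x0 l - (1 - of_bool (u2 l)) * dEta ec ed * xhi)"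

definition feasible_P ::
  "nat \<Rightarrow> real \<Rightarrow> real \<Rightarrow> real \<Rightarrow> real \<Rightarrow> real \<Rightarrow> real \<Rightarrow> real \<Rightarrow> real \<Rightarrow> real \<Rightarrow>
   (nat \<Rightarrow> real) \<Rightarrow> (nat \<Rightarrow> real) \<Rightarrow> (nat \<Rightarrow> real) \<Rightarrow>
   (nat \<Rightarrow> real) \<Rightarrow> (nat \<Rightarrow> real) \<Rightarrow> (nat \<Rightarrow> real) \<Rightarrow> (nat \<Rightarrow> real) \<Rightarrow>
   (nat \<Rightarrow> nat \<Rightarrow> real) \<Rightarrow> (nat \<Rightarrow> nat \<Rightarrow> real) \<Rightarrow> (nat \<Rightarrow> bool) \<Rightarrow> (nat \<Rightarrow> bool) \<Rightarrow> bool" where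
  "feasible_P K dt gam ylo yhi xlo xhi ec ed y0 x0 xu xd al be laL laU LaL LaU u1 u2 \<longleftrightarrow>
     common_constr K dt gam ylo yhi xlo xhi ec ed y0 x0 xu xd al be laL laU LaL LaU u1 u2 \<and>
     \<comment> \<open>(i)\<close>
     (\<forall>k\<in>{1..K}. \<forall>l\<in>{1..<k}.
        LaU k l * xd l + laU k * x0 l \<ge>
          of_bool (u2 l) * (xlo * (xhi - xlo) / ed) - of_bool (u1 l) * (xhi\<^sup>2 / (4 * ed)))"

definition feasible_Pbar ::
  "nat \<Rightarrow> real \<Rightarrow> real \<Rightarrow> real \<Rightarrow> real \<Rightarrow> real \<Rightarrow> real \<Rightarrow> real \<Rightarrow> real \<Rightarrow> real \<Rightarrow>
   (nat \<Rightarrow> real) \<Rightarrow> (nat \<Rightarrow> real) \<Rightarrow> (nat \<Rightarrow> real) \<Rightarrow>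
   (nat \<Rightarrow> real) \<Rightarrow> (nat \<Rightarrow> real) \<Rightarrow> (nat \<Rightarrow> real) \<Rightarrow> (nat \<Rightarrow> real) \<Rightarrow>
   (nat \<Rightarrow> nat \<Rightarrow> real) \<Rightarrow> (nat \<Rightarrow> nat \<Rightarrow> real) \<Rightarrow> (nat \<Rightarrow> bool) \<Rightarrow> (nat \<Rightarrow> bool) \<Rightarrow>
   (nat \<Rightarrow> bool) \<Rightarrow> bool" where
  "feasible_Pbar K dt gam ylo yhi xlo xhi ec ed y0 x0 xu xd al be laL laU LaL LaU u1 u2 u3 \<longleftrightarrow>
     common_constr K dt gam ylo yhi xlo xhi ec ed y0 x0 xu xd al be laL laU LaL LaU u1 u2 \<and>
     (\<forall>k\<in>{1..K-1}.
        xd k - (1 - ec * ed) * x0 k - ed * laU k \<ge> - ((2 - ec * ed) * xhi - xlo) * (1 - of_bool (u3 k)) \<and>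
        xd k - (1 - ec * ed) * x0 k - ed * laU k \<le> of_bool (u3 k) * (ec * ed * xhi - xlo)) \<and>
     (\<forall>k\<in>{1..K}. \<forall>l\<in>{1..<k}.
        LaU k l \<ge> - ec * x0 l - (of_bool (u1 l) + 1 - of_bool (u3 l)) * dEta ec ed * xhi \<and>
        LaU k l \<ge> (xd l - x0 l) / ed - laU k + (of_bool (u2 l) + of_bool (u3 l)) * dEta ec ed * xlo)"

definition objective ::
  "((nat \<Rightarrow> real) \<Rightarrow> (nat \<Rightarrow> real) \<Rightarrow> (nat \<Rightarrow> real) \<Rightarrow> real) \<Rightarrow>
   ((nat \<Rightarrow> real) \<Rightarrow> (nat \<Rightarrow> real) \<Rightarrow> (nat \<Rightarrow> real) \<Rightarrow> real \<Rightarrow> real) \<Rightarrow>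
   (nat \<Rightarrow> real) \<Rightarrow> (nat \<Rightarrow> real) \<Rightarrow> (nat \<Rightarrow> real) \<Rightarrow> real \<Rightarrow> real" where
  "objective c phi x0 xu xd y0 = c x0 xu xd + phi x0 xu xd y0"

end

theory Submission
  imports Defs
begin

(* Keep every auxiliary variable of a feasible point of (P-bar) except lambda-bar, which is capped
   at (xhi - xlo) / ed.  Wherever lambda-bar_k enters a lower bound t - lambda-bar_k on
   Lambda-bar_kl, the remaining constraints already force t - Lambda-bar_kl <= (xhi - xlo) / ed,
   and the upsilon_3 constraints hold outright when ed * lambda-bar_k = xhi - xlo; so the capped
   point is still feasible for (P-bar).  For capped lambda-bar, constraint (i) follows by cases on
   the signs of x0_l and x0_l - xd_l, which (g) ties to upsilon_2 and upsilon_1: if x0_l <= 0 the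
   cap gives the bound, if 0 <= xd_l <= x0_l it comes from (xd_l - x0_l) xd_l >= - x0_l^2 / 4,
   and if 0 <= x0_l <= xd_l the upsilon_3 bounds on Lambda-bar give
   Lambda-bar_kl xd_l + lambda-bar_k x0_l >= (xd_l - x0_l) (Lambda-bar_kl + c x0_l) >= 0
   with c = ec or c = 1 / ed. *)

(* Constraints (g), (h), (i) and the upsilon_3 bounds on Lambda-bar for a single pair l < k,
   with lam standing for laU k and L for LaU k l. *)
definition constr_g :: "real \<Rightarrow> real \<Rightarrow> bool \<Rightarrow> bool \<Rightarrow> real \<Rightarrow> real \<Rightarrow> bool" where
  "constr_g xlo xhi u1 u2 x0 xd \<longleftrightarrow>
     (1 - of_bool u1) * xlo \<le> x0 - xd \<and> x0 - xd \<le> of_bool u1 * xhi \<and>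
     of_bool u2 * xlo \<le> x0 \<and> x0 \<le> (1 - of_bool u2) * xhi"

definition constr_h ::
  "real \<Rightarrow> real \<Rightarrow> real \<Rightarrow> real \<Rightarrow> bool \<Rightarrow> bool \<Rightarrow> real \<Rightarrow> real \<Rightarrow> real \<Rightarrow> real \<Rightarrow> bool" where
  "constr_h ec ed xlo xhi u1 u2 x0 xd lam L \<longleftrightarrow>
     L \<ge> (xd - x0) / ed - lam + (1 - of_bool u1) * dEta ec ed * xlo \<and>
     L \<ge> - x0 / ed + of_bool u2 * dEta ec ed * xlo \<and>
     L \<ge> ec * (xd - x0) - lam - of_bool u1 * dEta ec ed * xhi \<and>
     L \<ge> - ec * x0 - (1 - of_bool u2) * dEta ec ed * xhi"

definition constr_hbar ::
  "real \<Rightarrow> real \<Rightarrow> real \<Rightarrow> real \<Rightarrow> bool \<Rightarrow> bool \<Rightarrow> bool \<Rightarrow> real \<Rightarrow> real \<Rightarrow> real \<Rightarrow> real \<Rightarrow> bool"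
  where
  "constr_hbar ec ed xlo xhi u1 u2 u3 x0 xd lam L \<longleftrightarrow>
     L \<ge> - ec * x0 - (of_bool u1 + 1 - of_bool u3) * dEta ec ed * xhi \<and>
     L \<ge> (xd - x0) / ed - lam + (of_bool u2 + of_bool u3) * dEta ec ed * xlo"

definition constr_i :: "real \<Rightarrow> real \<Rightarrow> real \<Rightarrow> bool \<Rightarrow> bool \<Rightarrow> real \<Rightarrow> real \<Rightarrow> real \<Rightarrow> real \<Rightarrow> bool"
  where
  "constr_i ed xlo xhi u1 u2 x0 xd lam L \<longleftrightarrow>
     L * xd + lam * x0 \<ge> of_bool u2 * (xlo * (xhi - xlo) / ed) - of_bool u1 * (xhi\<^sup>2 / (4 * ed))"

definition lam_cap :: "real \<Rightarrow> real \<Rightarrow> real \<Rightarrow> real" where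
  "lam_cap ed xlo xhi = (xhi - xlo) / ed"

lemma mult_add_mult_ge_of_gap:
  fixes t L lam x0 xd :: real
  assumes "0 \<le> xd" "xd \<le> x0" "0 \<le> lam" "t - L \<le> lam"
  shows "t * xd \<le> L * xd + lam * x0"
proof (cases "t \<le> L")
  case True
  then show ?thesis
    using assms mult_right_mono[OF True, of xd] by (simp add: add_increasing2)
next
  case False
  have "(t - L) * x0 \<le> lam * x0"
    using assms by (simp add: mult_right_mono)
  moreover have "t * (xd - x0) \<le> L * (xd - x0)"
    using False assms by (simp add: mult_right_mono_neg)
  ultimately show ?thesis by (simp add: algebra_simps)
qed

lemma mult_add_mult_nonneg_of_gap:
  fixes c L lam x0 xd :: real
  assumes "0 \<le> x0" "x0 \<le> xd" "c * (xd - x0) - L \<le> lam" "- c * x0 \<le> L"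
  shows "0 \<le> L * xd + lam * x0"
proof -
  have "(c * (xd - x0) - L) * x0 \<le> lam * x0"
    using assms by (simp add: mult_right_mono)
  moreover have "0 \<le> (xd - x0) * (L + c * x0)"
    using assms by simp
  ultimately show ?thesis by (simp add: algebra_simps)
qed

lemma common_constr_offdiagD:
  assumes "common_constr K dt gam ylo yhi xlo xhi ec ed y0 x0 xu xd al be laL laU LaL LaU u1 u2"
    and "k \<in> {1..K}" and "l \<in> {1..<k}"
  shows "constr_g xlo xhi (u1 l) (u2 l) (x0 l) (xd l)" and "0 \<le> xd l" and "0 \<le> laU k"
    and "constr_h ec ed xlo xhi (u1 l) (u2 l) (x0 l) (xd l) (laU k) (LaU k l)"
proof -
  have "l \<in> {1..K-1}" "l \<in> {1..K}"
    using assms(2,3) by auto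
  then show "constr_g xlo xhi (u1 l) (u2 l) (x0 l) (xd l)" "0 \<le> xd l" "0 \<le> laU k"
    "constr_h ec ed xlo xhi (u1 l) (u2 l) (x0 l) (xd l) (laU k) (LaU k l)"
    using assms unfolding common_constr_def constr_g_def constr_h_def by blast+
qed

context
  fixes ec ed xlo xhi :: real
  assumes ec_nonneg: "0 \<le> ec" and ed_pos: "0 < ed" and ec_ed_le_1: "ec * ed \<le> 1"
    and xlo_nonpos: "xlo \<le> 0" and xhi_nonneg: "0 \<le> xhi"
begin

lemma ec_le_inverse_ed: "ec \<le> 1 / ed"
  using ec_ed_le_1 ed_pos by (simp add: field_simps)

lemma dEta_nonneg: "0 \<le> dEta ec ed"
  using ec_le_inverse_ed by (simp add: dEta_def)

lemma lam_cap_nonneg: "0 \<le> lam_cap ed xlo xhi"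
  using ed_pos xlo_nonpos xhi_nonneg by (simp add: lam_cap_def)

lemma constr_g_bounds:
  assumes "constr_g xlo xhi u1 u2 x0 xd"
  shows "xlo \<le> x0 - xd" and "x0 \<le> xhi"
  using assms xlo_nonpos xhi_nonneg by (cases u1; cases u2; simp add: constr_g_def)+

lemma ec_mult_gap_le_lam_cap:
  assumes "xlo \<le> x0 - xd"
  shows "ec * (xd - x0) \<le> lam_cap ed xlo xhi"
proof -
  have "ec * (xd - x0) \<le> ec * - xlo"
    using assms ec_nonneg by (intro mult_left_mono) auto
  also have "\<dots> \<le> 1 / ed * - xlo"
    using ec_le_inverse_ed xlo_nonpos by (intro mult_right_mono) auto
  also have "\<dots> \<le> lam_cap ed xlo xhi"
    using ed_pos xhi_nonneg by (simp add: lam_cap_def diff_divide_distrib)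
  finally show ?thesis .
qed

lemma xd_div_le_lam_cap:
  assumes "constr_g xlo xhi u1 u2 x0 xd"
  shows "xd / ed \<le> lam_cap ed xlo xhi"
  using constr_g_bounds[OF assms] ed_pos by (simp add: lam_cap_def divide_right_mono)

lemma constr_h_cap:
  assumes g: "constr_g xlo xhi u1 u2 x0 xd" and h: "constr_h ec ed xlo xhi u1 u2 x0 xd lam L"
  shows "constr_h ec ed xlo xhi u1 u2 x0 xd (min lam (lam_cap ed xlo xhi)) L"
proof -
  have dEta_le: "dEta ec ed \<le> 1 / ed"
    using ec_nonneg by (simp add: dEta_def)
  have gap_h1: "(xd - x0) / ed - L + (1 - of_bool u1) * dEta ec ed * xlo \<le> lam_cap ed xlo xhi"
  proof -
    have "xlo / ed \<le> dEta ec ed * xlo"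
      using mult_right_mono_neg[OF dEta_le xlo_nonpos] by simp
    moreover have "dEta ec ed * xlo \<le> 0"
      using dEta_nonneg xlo_nonpos by (simp add: mult_nonneg_nonpos)
    moreover have "u1 \<Longrightarrow> xd / ed \<le> xhi / ed"
      using g constr_g_bounds(2)[OF g] ed_pos by (simp add: constr_g_def divide_right_mono)
    ultimately show ?thesis
      using h xd_div_le_lam_cap[OF g] g
      by (cases u1; cases u2; simp add: constr_h_def constr_g_def lam_cap_def diff_divide_distrib)
  qed
  have gap_h3: "ec * (xd - x0) - L - of_bool u1 * dEta ec ed * xhi \<le> lam_cap ed xlo xhi"
  proof -
    have "ec * xd \<le> ec * (xhi - xlo)"
      using constr_g_bounds[OF g] ec_nonneg by (intro mult_left_mono) auto
    moreover have "0 \<le> dEta ec ed * xhi" "dEta ec ed * xhi \<le> dEta ec ed * (xhi - xlo)"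
      using dEta_nonneg xhi_nonneg xlo_nonpos by (auto intro: mult_left_mono)
    moreover have "ec * (xhi - xlo) + dEta ec ed * (xhi - xlo) = lam_cap ed xlo xhi"
      by (simp add: dEta_def lam_cap_def algebra_simps)
    ultimately show ?thesis
      using h by (cases u1; cases u2; simp add: constr_h_def algebra_simps)
  qed
  show ?thesis
    using h gap_h1 gap_h3 by (auto simp: constr_h_def min_def)
qed

lemma constr_hbar_cap:
  assumes g: "constr_g xlo xhi u1 u2 x0 xd" and h: "constr_h ec ed xlo xhi u1 u2 x0 xd lam L"
    and hbar: "constr_hbar ec ed xlo xhi u1 u2 u3 x0 xd lam L"
  shows "constr_hbar ec ed xlo xhi u1 u2 u3 x0 xd (min lam (lam_cap ed xlo xhi)) L"
proof -
  have "dEta ec ed * xlo \<le> 0"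
    using dEta_nonneg xlo_nonpos by (simp add: mult_nonneg_nonpos)
  then have gap: "(xd - x0) / ed - L + (of_bool u2 + of_bool u3) * dEta ec ed * xlo \<le> lam_cap ed xlo xhi"
    using h xd_div_le_lam_cap[OF g]
    by (cases u2; cases u3; simp add: constr_h_def diff_divide_distrib)
  show ?thesis
    using hbar gap by (auto simp: constr_hbar_def min_def)
qed

lemma u3_upper_cap:
  assumes g: "constr_g xlo xhi u1 u2 x0 xd"
    and "xd - (1 - ec * ed) * x0 - ed * lam \<le> of_bool u3 * (ec * ed * xhi - xlo)"
  shows "xd - (1 - ec * ed) * x0 - ed * min lam (lam_cap ed xlo xhi) \<le> of_bool u3 * (ec * ed * xhi - xlo)"
proof (cases "lam \<le> lam_cap ed xlo xhi")
  case True
  then show ?thesis using assms(2) by simp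
next
  case False
  have "ec * ed * x0 \<le> ec * ed * xhi"
    using constr_g_bounds(2)[OF g] ec_nonneg ed_pos by (intro mult_left_mono) auto
  also have "\<dots> \<le> xhi"
    using ec_ed_le_1 ec_nonneg ed_pos xhi_nonneg by (simp add: mult_left_le_one_le)
  finally have "xd - (1 - ec * ed) * x0 - (xhi - xlo) \<le> 0"
    using constr_g_bounds(1)[OF g] by (simp add: algebra_simps)
  moreover have "0 \<le> of_bool u3 * (ec * ed * xhi - xlo)"
  proof -
    have "0 \<le> ec * ed * xhi"
      using ec_nonneg ed_pos xhi_nonneg by simp
    then show ?thesis
      using xlo_nonpos by simp
  qed
  ultimately show ?thesis
    using False ed_pos by (simp add: lam_cap_def)
qed

lemma constr_i_of_cuts:
  assumes g: "constr_g xlo xhi u1 u2 x0 xd" and xd_nonneg: "0 \<le> xd"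
    and lam: "0 \<le> lam" "lam \<le> lam_cap ed xlo xhi"
    and h: "constr_h ec ed xlo xhi u1 u2 x0 xd lam L"
    and hbar: "constr_hbar ec ed xlo xhi u1 u2 u3 x0 xd lam L"
  shows "constr_i ed xlo xhi u1 u2 x0 xd lam L"
proof (cases u1; cases u2)
  assume "u1" "u2"
  then have "x0 = 0" "xd = 0"
    using g xd_nonneg by (auto simp: constr_g_def)
  moreover have "xlo * (xhi - xlo) / ed \<le> 0" "0 \<le> xhi\<^sup>2 / (4 * ed)"
    using xlo_nonpos xhi_nonneg ed_pos by (simp_all add: mult_nonpos_nonneg divide_nonpos_pos)
  ultimately show ?thesis
    using \<open>u1\<close> \<open>u2\<close> by (simp add: constr_i_def)
next
  assume "\<not> u1" "u2"
  then have x0: "xlo \<le> x0" "x0 \<le> 0"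
    using g by (auto simp: constr_g_def)
  have "ec * x0 \<le> 0"
    using x0 ec_nonneg by (simp add: mult_nonneg_nonpos)
  then have "0 \<le> L"
    using h \<open>u2\<close> by (simp add: constr_h_def)
  then have "0 \<le> L * xd"
    using xd_nonneg by simp
  moreover have "lam_cap ed xlo xhi * x0 \<le> lam * x0"
    using lam x0 by (simp add: mult_right_mono_neg)
  moreover have "lam_cap ed xlo xhi * xlo \<le> lam_cap ed xlo xhi * x0"
    using lam_cap_nonneg x0 by (simp add: mult_left_mono)
  ultimately show ?thesis
    using \<open>\<not> u1\<close> \<open>u2\<close> by (simp add: constr_i_def lam_cap_def field_simps)
next
  assume "u1" "\<not> u2"
  then have x: "0 \<le> xd" "xd \<le> x0" "x0 \<le> xhi"
    using g xd_nonneg by (auto simp: constr_g_def)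
  have "(xd - x0) / ed * xd \<le> L * xd + lam * x0"
    using h \<open>u1\<close> x lam by (intro mult_add_mult_ge_of_gap) (auto simp: constr_h_def)
  moreover have "- (xhi\<^sup>2 / 4) \<le> (xd - x0) * xd"
  proof -
    have "x0\<^sup>2 \<le> xhi\<^sup>2"
      using x by (simp add: power_mono)
    moreover have "0 \<le> (x0 - 2 * xd)\<^sup>2"
      by simp
    ultimately show ?thesis
      by (simp add: power2_eq_square algebra_simps)
  qed
  then have "- (xhi\<^sup>2 / (4 * ed)) \<le> (xd - x0) / ed * xd"
    using ed_pos by (simp add: field_simps)
  ultimately show ?thesis
    using \<open>u1\<close> \<open>\<not> u2\<close> by (simp add: constr_i_def)
next
  assume "\<not> u1" "\<not> u2"
  then have x: "0 \<le> x0" "x0 \<le> xd"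
    using g by (auto simp: constr_g_def)
  have "0 \<le> L * xd + lam * x0"
  proof (cases u3)
    case True
    then show ?thesis
      using h hbar \<open>\<not> u1\<close> x by (intro mult_add_mult_nonneg_of_gap[where c = ec])
        (auto simp: constr_h_def constr_hbar_def)
  next
    case False
    then show ?thesis
      using h hbar \<open>\<not> u2\<close> x by (intro mult_add_mult_nonneg_of_gap[where c = "1 / ed"])
        (auto simp: constr_h_def constr_hbar_def diff_divide_distrib)
  qed
  then show ?thesis
    using \<open>\<not> u1\<close> \<open>\<not> u2\<close> by (simp add: constr_i_def)
qed

lemma common_constr_cap_laU:
  assumes gam: "0 \<le> gam"
    and C: "common_constr K dt gam ylo yhi xlo xhi ec ed y0 x0 xu xd al be laL laU LaL LaU u1 u2"
  shows "common_constr K dt gam ylo yhi xlo xhi ec ed y0 x0 xu xd al be laL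
           (\<lambda>k. min (laU k) (lam_cap ed xlo xhi)) LaL LaU u1 u2"
proof -
  let ?laU' = "\<lambda>k. min (laU k) (lam_cap ed xlo xhi)"
  note C' = C[unfolded common_constr_def]
  have nonneg: "\<forall>k\<in>{1..K}. 0 \<le> ?laU' k"
    using C' lam_cap_nonneg by auto
  have e: "\<forall>k\<in>{1..K}. y0 + gam * ?laU' k + dt * (\<Sum>l=1..k. LaU k l) \<le> yhi"
  proof
    fix k assume "k \<in> {1..K}"
    then have "y0 + gam * laU k + dt * (\<Sum>l=1..k. LaU k l) \<le> yhi"
      using C' by blast
    moreover have "gam * ?laU' k \<le> gam * laU k"
      using gam by (simp add: mult_left_mono)
    ultimately show "y0 + gam * ?laU' k + dt * (\<Sum>l=1..k. LaU k l) \<le> yhi"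
      by linarith
  qed
  have f: "\<forall>k\<in>{1..K}. LaU k k \<ge> ec * (xd k - x0 k) - ?laU' k"
  proof
    fix k assume "k \<in> {1..K}"
    then have "xlo \<le> x0 k - xd k" "0 \<le> LaU k k" "ec * (xd k - x0 k) - laU k \<le> LaU k k"
      using C' by auto
    then show "LaU k k \<ge> ec * (xd k - x0 k) - ?laU' k"
      using ec_mult_gap_le_lam_cap[of "x0 k" "xd k"] by (auto simp: min_def)
  qed
  have h: "\<forall>k\<in>{1..K}. \<forall>l\<in>{1..<k}.
      constr_h ec ed xlo xhi (u1 l) (u2 l) (x0 l) (xd l) (?laU' k) (LaU k l)"
    using constr_h_cap common_constr_offdiagD[OF C] by blast
  show ?thesis
    using C' nonneg e f h unfolding common_constr_def constr_h_def by blast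
qed

lemma feasible_Pbar_cap_laU:
  assumes gam: "0 \<le> gam"
    and P: "feasible_Pbar K dt gam ylo yhi xlo xhi ec ed y0 x0 xu xd al be laL laU LaL LaU u1 u2 u3"
  shows "feasible_Pbar K dt gam ylo yhi xlo xhi ec ed y0 x0 xu xd al be laL
           (\<lambda>k. min (laU k) (lam_cap ed xlo xhi)) LaL LaU u1 u2 u3"
proof -
  let ?laU' = "\<lambda>k. min (laU k) (lam_cap ed xlo xhi)"
  note P' = P[unfolded feasible_Pbar_def]
  have C: "common_constr K dt gam ylo yhi xlo xhi ec ed y0 x0 xu xd al be laL laU LaL LaU u1 u2"
    using P' by blast
  have big_M: "\<forall>k\<in>{1..K-1}.
      xd k - (1 - ec * ed) * x0 k - ed * ?laU' k \<ge> - ((2 - ec * ed) * xhi - xlo) * (1 - of_bool (u3 k)) \<and>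
      xd k - (1 - ec * ed) * x0 k - ed * ?laU' k \<le> of_bool (u3 k) * (ec * ed * xhi - xlo)"
  proof
    fix k assume k: "k \<in> {1..K-1}"
    then have g: "constr_g xlo xhi (u1 k) (u2 k) (x0 k) (xd k)"
      using C unfolding common_constr_def constr_g_def by blast
    have "ed * ?laU' k \<le> ed * laU k"
      using ed_pos by (simp add: mult_left_mono)
    then show "xd k - (1 - ec * ed) * x0 k - ed * ?laU' k \<ge> - ((2 - ec * ed) * xhi - xlo) * (1 - of_bool (u3 k)) \<and>
      xd k - (1 - ec * ed) * x0 k - ed * ?laU' k \<le> of_bool (u3 k) * (ec * ed * xhi - xlo)"
      using P' k u3_upper_cap[OF g] by force
  qed
  have hbar: "\<forall>k\<in>{1..K}. \<forall>l\<in>{1..<k}.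
      constr_hbar ec ed xlo xhi (u1 l) (u2 l) (u3 l) (x0 l) (xd l) (?laU' k) (LaU k l)"
  proof (intro ballI)
    fix k l assume kl: "k \<in> {1..K}" "l \<in> {1..<k}"
    then have "constr_hbar ec ed xlo xhi (u1 l) (u2 l) (u3 l) (x0 l) (xd l) (laU k) (LaU k l)"
      using P' unfolding constr_hbar_def by blast
    then show "constr_hbar ec ed xlo xhi (u1 l) (u2 l) (u3 l) (x0 l) (xd l) (?laU' k) (LaU k l)"
      using constr_hbar_cap common_constr_offdiagD[OF C kl] by blast
  qed
  show ?thesis
    using common_constr_cap_laU[OF gam C] big_M hbar
    unfolding feasible_Pbar_def constr_hbar_def by blast
qed

lemma feasible_P_of_feasible_Pbar:
  assumes P: "feasible_Pbar K dt gam ylo yhi xlo xhi ec ed y0 x0 xu xd al be laL laU LaL LaU u1 u2 u3"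
    and capped: "\<forall>k\<in>{1..K}. laU k \<le> lam_cap ed xlo xhi"
  shows "feasible_P K dt gam ylo yhi xlo xhi ec ed y0 x0 xu xd al be laL laU LaL LaU u1 u2"
proof -
  note P' = P[unfolded feasible_Pbar_def]
  have C: "common_constr K dt gam ylo yhi xlo xhi ec ed y0 x0 xu xd al be laL laU LaL LaU u1 u2"
    using P' by blast
  have "\<forall>k\<in>{1..K}. \<forall>l\<in>{1..<k}. constr_i ed xlo xhi (u1 l) (u2 l) (x0 l) (xd l) (laU k) (LaU k l)"
  proof (intro ballI)
    fix k l assume kl: "k \<in> {1..K}" "l \<in> {1..<k}"
    then have "constr_hbar ec ed xlo xhi (u1 l) (u2 l) (u3 l) (x0 l) (xd l) (laU k) (LaU k l)"
      using P' unfolding constr_hbar_def by blast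
    moreover have "laU k \<le> lam_cap ed xlo xhi"
      using capped kl by blast
    ultimately show "constr_i ed xlo xhi (u1 l) (u2 l) (x0 l) (xd l) (laU k) (LaU k l)"
      using constr_i_of_cuts common_constr_offdiagD[OF C kl] by blast
  qed
  then show ?thesis
    using C unfolding feasible_P_def constr_i_def by blast
qed

end

theorem proposition9:
  fixes K :: nat and dt T gam ylo yhi xlo xhi ec ed y0 :: real
    and x0 xu xd :: "nat \<Rightarrow> real"
  assumes "K \<ge> 1" and "dt > 0" and "T = real K * dt"
    and "0 \<le> ylo" and "ylo \<le> yhi" and "xlo \<le> 0" and "0 \<le> xhi"
    and "0 < ec" and "ec < 1" and "0 < ed" and "ed < 1"
    and "y0 \<ge> 0" and "0 \<le> gam" and "gam \<le> T"
    and "feasible_Pbar K dt gam ylo yhi xlo xhi ec ed y0 x0 xu xd al be laL laU LaL LaU u1 u2 u3"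
  shows "\<exists>al' be' laL' laU' LaL' LaU' u1' u2'.
           feasible_P K dt gam ylo yhi xlo xhi ec ed y0 x0 xu xd al' be' laL' laU' LaL' LaU' u1' u2'"
proof -
  have ec: "0 \<le> ec" "ec * ed \<le> 1"
    using assms(8,9,10,11) by (simp_all add: mult_le_one)
  let ?laU' = "\<lambda>k. min (laU k) (lam_cap ed xlo xhi)"
  have "feasible_Pbar K dt gam ylo yhi xlo xhi ec ed y0 x0 xu xd al be laL ?laU' LaL LaU u1 u2 u3"
    using feasible_Pbar_cap_laU[OF ec(1) assms(10) ec(2) assms(6,7,13,15)] .
  then have "feasible_P K dt gam ylo yhi xlo xhi ec ed y0 x0 xu xd al be laL ?laU' LaL LaU u1 u2"
    using feasible_P_of_feasible_Pbar[OF ec(1) assms(10) ec(2) assms(6,7)] by simp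
  then show ?thesis
    by blast
qed

end
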